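(* In the Min Sum Set Cover case (all box values in $\{0,\infty\}$), there is a scenario-independent rounding which, given any doubly stochastic $\overline{x}\in[0,1]^{n\times n}$, produces a random order of opening the boxes such that for every scenario $s$ the expected number of boxes opened until a box of value $0$ in $s$ is opened is at most $4\,\overline{g}^s(\overline{x})$; i.e. it is a $4$-approximation.
   Context: There are $n$ boxes $\mathcal{B}=\{1,\dots,n\}$ and time steps $\mathcal{T}=\{1,\dots,n\}$. A scenario $s$ is a vector $c^s\in\{0,\infty\}^n$ with at least one zero entry. For doubly stochastic $x$, $\overline{g}^s(x)=\min_{z\ge0}\sum_{i\in\mathcal{B},t\in\mathcal{T}}(t+c^s_i)z_{it}$ subject to $\sum_{i,t}z_{it}=1$ and $z_{it}\le x_{it}$ for all $i,t$ (with $z_{it}=0$ forced wherever $c^s_i=\infty$ in a finite solution). *)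

theory Defs
  imports "HOL-Probability.Probability"
begin

text \<open>Boxes and time steps are both indexed by {1..n}. A fractional solution is
  x :: nat => nat => real, with x i t the mass of box i at time t.\<close>

definition doubly_stochastic :: "nat \<Rightarrow> (nat \<Rightarrow> nat \<Rightarrow> real) \<Rightarrow> bool" where
  "doubly_stochastic n x \<longleftrightarrow>
     (\<forall>i\<in>{1..n}. \<forall>t\<in>{1..n}. 0 \<le> x i t) \<and>
     (\<forall>i\<in>{1..n}. (\<Sum>t\<in>{1..n}. x i t) = 1) \<and>
     (\<forall>t\<in>{1..n}. (\<Sum>i\<in>{1..n}. x i t) = 1)"

text \<open>A Min Sum Set Cover scenario is described by its set S of boxes of value 0
  (all other boxes have value infinity); S is nonempty. The LP value
  g^s(x) = min { sum_{i,t} (t + c_i) z_it : z >= 0, sum z = 1, z <= x }, where a finite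
  value forces z_it = 0 for boxes of infinite value.\<close>

definition gbar :: "nat \<Rightarrow> (nat \<Rightarrow> nat \<Rightarrow> real) \<Rightarrow> nat set \<Rightarrow> real" where
  "gbar n x S = Inf { (\<Sum>i\<in>{1..n}. \<Sum>t\<in>{1..n}. real t * z i t) | z.
       (\<forall>i\<in>{1..n}. \<forall>t\<in>{1..n}. 0 \<le> z i t \<and> z i t \<le> x i t) \<and>
       (\<Sum>i\<in>{1..n}. \<Sum>t\<in>{1..n}. z i t) = 1 \<and>
       (\<forall>i\<in>{1..n} - S. \<forall>t\<in>{1..n}. z i t = 0) }"

text \<open>An order of opening the boxes: \<sigma> permutes {1..n}, \<sigma> t is the box opened at
  time t. The number of boxes opened until a box of S is opened:\<close>

definition cover_time :: "nat \<Rightarrow> (nat \<Rightarrow> nat) \<Rightarrow> nat set \<Rightarrow> nat" where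
  "cover_time n \<sigma> S = Min {t\<in>{1..n}. \<sigma> t \<in> S}"

end

theory Submission
  imports Defs
begin

(* For j = 1..n draw, independently, a box b_j from the average of the first
   w_j = ceil(j/2) columns of x, and open the boxes in the order of their first draw.
   The cover time of S is at most the number of m < n for which b_1, ..., b_m all miss S,
   so its expectation is at most sum_m prod_{j<=m} (1 - q_j), with q_j = P(b_j in S).

   Let mu be the distribution of the time at which the LP solution covers S, i.e. of the
   increments of min(1, mass of x on S in the columns up to g). Then 1 - q_j <= E_mu f_j with
   f_j(g) = 1 - 1/w_j for g <= w_j and f_j(g) = 1 otherwise. The f_j are increasing, so by
   Harris' inequality prod_j E_mu f_j <= E_mu prod_j f_j. For fixed g the product
   prod_{j<=m} f_j(g) is 1 up to m = 2g - 2 and equals ((g-1)/k)^2 at m = 2k beyond, so its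
   sum over m is at most 4g. Finally E_mu g = sum_{s<n} (1 - min(1, mass up to s)), which is
   a lower bound on the LP value. *)

section \<open>Harris inequality on a chain\<close>

lemma Chebyshev_sum_weighted:
  fixes \<mu> A B :: "'a::linorder \<Rightarrow> real"
  assumes "finite G" and "\<And>g. g \<in> G \<Longrightarrow> 0 \<le> \<mu> g" and "sum \<mu> G = 1"
    and "mono_on G A" and "mono_on G B"
  shows "(\<Sum>g\<in>G. \<mu> g * A g) * (\<Sum>g\<in>G. \<mu> g * B g) \<le> (\<Sum>g\<in>G. \<mu> g * A g * B g)"
proof -
  let ?P = "\<lambda>g h. \<mu> g * A g * B g * \<mu> h" and ?Q = "\<lambda>g h. \<mu> g * A g * (\<mu> h * B h)"
  let ?D = "\<Sum>g\<in>G. \<Sum>h\<in>G. \<mu> g * \<mu> h * ((A g - A h) * (B g - B h))"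
  have "?D = (\<Sum>g\<in>G. \<Sum>h\<in>G. ?P g h + ?P h g - ?Q g h - ?Q h g)"
    by (intro sum.cong refl) (simp add: algebra_simps)
  also have "\<dots> = 2 * (\<Sum>g\<in>G. \<Sum>h\<in>G. ?P g h) - 2 * (\<Sum>g\<in>G. \<Sum>h\<in>G. ?Q g h)"
    by (simp add: sum.distrib sum_subtractf sum.swap[of "\<lambda>g h. ?P h g"] sum.swap[of "\<lambda>g h. ?Q h g"])
  also have "\<dots> = 2 * ((\<Sum>g\<in>G. \<mu> g * A g * B g) * (\<Sum>h\<in>G. \<mu> h)
                     - (\<Sum>g\<in>G. \<mu> g * A g) * (\<Sum>h\<in>G. \<mu> h * B h))"
    by (simp add: sum_product)
  finally have "?D = 2 * ((\<Sum>g\<in>G. \<mu> g * A g * B g) - (\<Sum>g\<in>G. \<mu> g * A g) * (\<Sum>g\<in>G. \<mu> g * B g))"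
    using assms(3) by simp
  moreover have "0 \<le> ?D"
  proof (intro sum_nonneg)
    fix g h assume "g \<in> G" "h \<in> G"
    then have "0 \<le> (A g - A h) * (B g - B h)"
      using assms(4,5) by (cases "g \<le> h") (auto simp: mono_on_def mult_nonpos_nonpos)
    with \<open>g \<in> G\<close> \<open>h \<in> G\<close> show "0 \<le> \<mu> g * \<mu> h * ((A g - A h) * (B g - B h))"
      using assms(2) by simp
  qed
  ultimately show ?thesis by simp
qed

lemma prod_mean_le_mean_prod:
  fixes \<mu> :: "'a::linorder \<Rightarrow> real" and F :: "'j \<Rightarrow> 'a \<Rightarrow> real"
  assumes "finite G" and "\<And>g. g \<in> G \<Longrightarrow> 0 \<le> \<mu> g" and "sum \<mu> G = 1"
    and "\<And>j g. j \<in> J \<Longrightarrow> g \<in> G \<Longrightarrow> 0 \<le> F j g" and "\<And>j. j \<in> J \<Longrightarrow> mono_on G (F j)"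
    and "finite J"
  shows "(\<Prod>j\<in>J. \<Sum>g\<in>G. \<mu> g * F j g) \<le> (\<Sum>g\<in>G. \<mu> g * (\<Prod>j\<in>J. F j g))"
  using \<open>finite J\<close> assms(4,5)
proof (induction J rule: finite_induct)
  case empty
  then show ?case using assms(3) by simp
next
  case (insert j J)
  have "(\<Prod>i\<in>insert j J. \<Sum>g\<in>G. \<mu> g * F i g)
      = (\<Sum>g\<in>G. \<mu> g * F j g) * (\<Prod>i\<in>J. \<Sum>g\<in>G. \<mu> g * F i g)"
    using insert.hyps by simp
  also have "\<dots> \<le> (\<Sum>g\<in>G. \<mu> g * F j g) * (\<Sum>g\<in>G. \<mu> g * (\<Prod>i\<in>J. F i g))"
    using insert assms(2) by (intro mult_left_mono sum_nonneg) auto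
  also have "\<dots> \<le> (\<Sum>g\<in>G. \<mu> g * F j g * (\<Prod>i\<in>J. F i g))"
    using insert.prems by (intro Chebyshev_sum_weighted assms(1-3))
      (auto simp: mono_on_def intro!: prod_mono)
  also have "\<dots> = (\<Sum>g\<in>G. \<mu> g * (\<Prod>i\<in>insert j J. F i g))"
    using insert.hyps by (simp add: mult.assoc)
  finally show ?case .
qed

section \<open>The survival products\<close>

definition window :: "nat \<Rightarrow> nat" where
  "window j = (j + 1) div 2"

definition miss_factor :: "nat \<Rightarrow> nat \<Rightarrow> real" where
  "miss_factor j g = (if g \<le> window j then 1 - 1 / real (window j) else 1)"

text \<open>If the LP solution covered the scenario exactly at time g, then survival g m would bound
  the probability that the first m draws all miss it.\<close>
definition survival :: "nat \<Rightarrow> nat \<Rightarrow> real" where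
  "survival g m = (\<Prod>j\<in>{1..m}. miss_factor j g)"

lemma miss_factor_nonneg: "0 \<le> miss_factor j g"
  by (cases "window j = 0") (auto simp: miss_factor_def field_simps)

lemma mono_miss_factor: "mono (miss_factor j)"
  by (auto simp: miss_factor_def intro: monoI)

lemma survival_Suc: "survival g (Suc m) = survival g m * miss_factor (Suc m) g"
  by (simp add: survival_def prod.cl_ivl_Suc)

lemma survival_nonneg: "0 \<le> survival g m"
  by (simp add: survival_def prod_nonneg miss_factor_nonneg)

lemma survival_eq_1: "m \<le> 2 * g - 2 \<Longrightarrow> survival g m = 1"
  by (induction m) (auto simp: survival_def prod.cl_ivl_Suc miss_factor_def window_def)

lemma survival_1: "0 < m \<Longrightarrow> survival 1 m = 0"
  by (auto simp: survival_def miss_factor_def window_def intro!: prod_zero bexI[of _ 1])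

lemma survival_closed_form:
  assumes "2 \<le> g" and "g - 1 \<le> k"
  shows "survival g (2 * k) = (real (g - 1) / real k)\<^sup>2"
    and "survival g (2 * k + 1) = (real (g - 1))\<^sup>2 / (real k * (real k + 1))"
proof -
  have factor: "miss_factor (2 * k + 1) g = real k / (real k + 1)"
    "miss_factor (2 * k + 2) g = real k / (real k + 1)" if "g - 1 \<le> k" for k
  proof -
    have "window (2 * k + 1) = k + 1" "window (2 * k + 2) = k + 1"
      by (simp_all add: window_def)
    moreover have "1 - 1 / (1 + real k) = real k / (real k + 1)"
      by (simp add: field_simps)
    ultimately show "miss_factor (2 * k + 1) g = real k / (real k + 1)"
      "miss_factor (2 * k + 2) g = real k / (real k + 1)"
      using that \<open>2 \<le> g\<close> by (simp_all add: miss_factor_def)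
  qed
  show even: "survival g (2 * k) = (real (g - 1) / real k)\<^sup>2"
    using \<open>g - 1 \<le> k\<close>
  proof (induction k rule: dec_induct)
    case base
    then show ?case using \<open>2 \<le> g\<close> by (simp add: survival_eq_1)
  next
    case (step k)
    have "1 \<le> real k" using step.hyps(1) \<open>2 \<le> g\<close> by simp
    have "survival g (2 * Suc k) = survival g (2 * k) * miss_factor (2 * k + 1) g * miss_factor (2 * k + 2) g"
      by (simp add: survival_Suc)
    also have "\<dots> = (real (g - 1) / real k)\<^sup>2 * (real k / (real k + 1)) * (real k / (real k + 1))"
      unfolding step.IH factor[OF step.hyps(1)] ..
    also have "\<dots> = (real (g - 1) / real k * (real k / (real k + 1)))\<^sup>2"
      by (simp add: power2_eq_square)
    also have "\<dots> = (real (g - 1) / real (Suc k))\<^sup>2"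
      using \<open>1 \<le> real k\<close> by simp
    finally show ?case .
  qed
  have "real k \<noteq> 0" using assms by simp
  have "survival g (2 * k + 1) = survival g (2 * k) * miss_factor (2 * k + 1) g"
    by (simp add: survival_Suc)
  also have "\<dots> = (real (g - 1) / real k)\<^sup>2 * (real k / (real k + 1))"
    unfolding even factor(1)[OF \<open>g - 1 \<le> k\<close>] ..
  also have "\<dots> = (real (g - 1))\<^sup>2 / (real k * (real k + 1))"
    using \<open>real k \<noteq> 0\<close> by (simp add: power_divide power2_eq_square)
  finally show "survival g (2 * k + 1) = (real (g - 1))\<^sup>2 / (real k * (real k + 1))" .
qed

lemma sum_survival_odd_le:
  assumes "2 \<le> g" and "g - 1 \<le> K"
  shows "(\<Sum>m<2 * K + 1. survival g m) \<le> 4 * real g - 3 - 2 * (real (g - 1))\<^sup>2 / real K"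
  using \<open>g - 1 \<le> K\<close>
proof (induction K rule: dec_induct)
  case base
  have "(\<Sum>m<2 * (g - 1) + 1. survival g m) = 2 * real g - 1"
    using \<open>2 \<le> g\<close> by (simp add: survival_eq_1 of_nat_diff)
  then show ?case using \<open>2 \<le> g\<close> by (simp add: power2_eq_square of_nat_diff)
next
  case (step K)
  define a where "a = (real (g - 1))\<^sup>2"
  have K: "1 \<le> real K" using step.hyps \<open>2 \<le> g\<close> by simp
  have odd: "survival g (2 * K + 1) = a / (real K * (real K + 1))"
    using survival_closed_form(2)[OF \<open>2 \<le> g\<close> step.hyps(1)] by (simp add: a_def)
  have even: "survival g (2 * Suc K) = a / (real K + 1)\<^sup>2"
    using survival_closed_form(1)[OF \<open>2 \<le> g\<close>, of "Suc K"] step.hyps(1)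
    by (simp add: a_def power_divide)
  have IH: "(\<Sum>m<2 * K + 1. survival g m) \<le> 4 * real g - 3 - 2 * a / real K"
    using step.IH by (simp add: a_def)
  have "(\<Sum>m<2 * Suc K + 1. survival g m)
      = (\<Sum>m<2 * K + 1. survival g m) + survival g (2 * K + 1) + survival g (2 * Suc K)"
    by simp
  txt \<open>Both new terms are at most a / (K (K + 1)) = a / K - a / (K + 1): the sum telescopes.\<close>
  moreover have "a / (real K + 1)\<^sup>2 \<le> a / (real K * (real K + 1))"
    using K by (intro divide_left_mono) (auto simp: a_def power2_eq_square)
  moreover have "2 * a / real K - 2 * a / (real K + 1) = 2 * (a / (real K * (real K + 1)))"
    using K by (simp add: field_simps)
  ultimately have "(\<Sum>m<2 * Suc K + 1. survival g m) \<le> 4 * real g - 3 - 2 * a / (real K + 1)"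
    using IH odd even by linarith
  then show ?case
    by (simp add: a_def add.commute)
qed

lemma sum_survival_le:
  assumes "1 \<le> g"
  shows "(\<Sum>m<N. survival g m) \<le> 4 * real g"
proof (cases "g = 1")
  case True
  have "(\<Sum>m<N. survival g m) = (\<Sum>m<N. if m = 0 then 1 else 0)"
    using True survival_1 by (intro sum.cong) (auto simp: survival_def)
  then show ?thesis using True by simp
next
  case False
  then have "2 \<le> g" using assms by simp
  have "(\<Sum>m<N. survival g m) \<le> (\<Sum>m<2 * (g - 1 + N) + 1. survival g m)"
    by (intro sum_mono2) (auto simp: survival_nonneg)
  also have "\<dots> \<le> 4 * real g - 3 - 2 * (real (g - 1))\<^sup>2 / real (g - 1 + N)"
    using sum_survival_odd_le[OF \<open>2 \<le> g\<close>, of "g - 1 + N"] by simp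
  also have "\<dots> \<le> 4 * real g"
  proof -
    have "0 \<le> 2 * (real (g - 1))\<^sup>2 / real (g - 1 + N)"
      by simp
    then show ?thesis by linarith
  qed
  finally show ?thesis .
qed

section \<open>A lower bound on the LP value\<close>

lemma sum_of_nat_mult_eq_sum_tails:
  fixes f :: "nat \<Rightarrow> 'a::comm_ring_1"
  shows "(\<Sum>t\<in>{1..n}. of_nat t * f t) = (\<Sum>s<n. (\<Sum>t\<in>{1..n}. f t) - (\<Sum>t\<in>{1..s}. f t))"
proof (induction n)
  case 0
  then show ?case by simp
next
  case (Suc n)
  have "(\<Sum>s<Suc n. (\<Sum>t\<in>{1..Suc n}. f t) - (\<Sum>t\<in>{1..s}. f t))
      = (\<Sum>s<Suc n. ((\<Sum>t\<in>{1..n}. f t) - (\<Sum>t\<in>{1..s}. f t)) + f (Suc n))"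
    by (intro sum.cong refl) (simp add: sum.cl_ivl_Suc)
  also have "\<dots> = (\<Sum>s<n. (\<Sum>t\<in>{1..n}. f t) - (\<Sum>t\<in>{1..s}. f t)) + of_nat (Suc n) * f (Suc n)"
    by (simp add: sum.distrib)
  finally show ?case
    using Suc by (simp add: sum.cl_ivl_Suc)
qed

definition lp_feasible :: "nat \<Rightarrow> (nat \<Rightarrow> nat \<Rightarrow> real) \<Rightarrow> nat set \<Rightarrow> (nat \<Rightarrow> nat \<Rightarrow> real) \<Rightarrow> bool" where
  "lp_feasible n x S z \<longleftrightarrow>
     (\<forall>i\<in>{1..n}. \<forall>t\<in>{1..n}. 0 \<le> z i t \<and> z i t \<le> x i t) \<and>
     (\<Sum>i\<in>{1..n}. \<Sum>t\<in>{1..n}. z i t) = 1 \<and>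
     (\<forall>i\<in>{1..n} - S. \<forall>t\<in>{1..n}. z i t = 0)"

lemma gbar_eq_Inf_lp_feasible:
  "gbar n x S = Inf {(\<Sum>i\<in>{1..n}. \<Sum>t\<in>{1..n}. real t * z i t) | z. lp_feasible n x S z}"
  by (simp add: gbar_def lp_feasible_def)

definition covered_mass :: "(nat \<Rightarrow> nat \<Rightarrow> real) \<Rightarrow> nat set \<Rightarrow> nat \<Rightarrow> real" where
  "covered_mass x S s = (\<Sum>t\<in>{1..s}. \<Sum>i\<in>S. x i t)"

lemma covered_mass_Suc: "covered_mass x S (Suc s) = covered_mass x S s + (\<Sum>i\<in>S. x i (Suc s))"
  by (simp add: covered_mass_def sum.cl_ivl_Suc)

lemma lp_feasible_exists:
  assumes "doubly_stochastic n x" and "S \<subseteq> {1..n}" and "S \<noteq> {}"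
  shows "\<exists>z. lp_feasible n x S z"
proof -
  have "finite S" using assms(2) finite_subset by blast
  then have card: "1 \<le> real (card S)" using assms(3) by (simp add: Suc_le_eq card_gt_0_iff)
  define z where "z i t = (if i \<in> S then x i t / real (card S) else 0)" for i t
  have "(\<Sum>i\<in>{1..n}. \<Sum>t\<in>{1..n}. z i t) = (\<Sum>i\<in>S. \<Sum>t\<in>{1..n}. x i t / real (card S))"
    using assms(2) by (intro sum.mono_neutral_cong_right) (auto simp: z_def)
  also have "\<dots> = (\<Sum>i\<in>S. 1 / real (card S))"
    using assms(1,2) by (intro sum.cong refl)
      (auto simp: doubly_stochastic_def sum_divide_distrib[symmetric])
  also have "\<dots> = 1" using card by simp
  finally have "(\<Sum>i\<in>{1..n}. \<Sum>t\<in>{1..n}. z i t) = 1" .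
  moreover have "0 \<le> z i t \<and> z i t \<le> x i t" if "i \<in> {1..n}" "t \<in> {1..n}" for i t
  proof -
    have "0 \<le> x i t" using assms(1) that by (simp add: doubly_stochastic_def)
    then show ?thesis using card by (auto simp: z_def divide_le_eq mult_le_cancel_left1)
  qed
  ultimately show ?thesis
    unfolding lp_feasible_def by (intro exI[of _ z]) (auto simp: z_def)
qed

text \<open>The LP pays the sum over s of the mass not yet placed on S by time s, and by time s it
  can place at most the mass of x on S in columns 1..s.\<close>
lemma sum_uncovered_le_lp_value:
  assumes "lp_feasible n x S z" and "S \<subseteq> {1..n}"
  shows "(\<Sum>s<n. 1 - min (covered_mass x S s) 1) \<le> (\<Sum>i\<in>{1..n}. \<Sum>t\<in>{1..n}. real t * z i t)"
proof -
  define c where "c t = (\<Sum>i\<in>{1..n}. z i t)" for t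
  have z: "\<And>i t. i \<in> {1..n} \<Longrightarrow> t \<in> {1..n} \<Longrightarrow> 0 \<le> z i t \<and> z i t \<le> x i t"
    and sum_z: "(\<Sum>i\<in>{1..n}. \<Sum>t\<in>{1..n}. z i t) = 1"
    and z_outside: "\<And>i t. i \<in> {1..n} - S \<Longrightarrow> t \<in> {1..n} \<Longrightarrow> z i t = 0"
    using assms(1) by (auto simp: lp_feasible_def)
  have sum_c: "(\<Sum>t\<in>{1..n}. c t) = 1"
    unfolding c_def using sum_z by (subst sum.swap) simp
  have "c t \<le> (\<Sum>i\<in>S. x i t)" if "t \<in> {1..n}" for t
  proof -
    have "c t = (\<Sum>i\<in>S. z i t)"
      unfolding c_def using assms(2) z_outside that by (intro sum.mono_neutral_right) auto
    also have "\<dots> \<le> (\<Sum>i\<in>S. x i t)"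
      using assms(2) z that by (intro sum_mono) auto
    finally show ?thesis .
  qed
  then have "(\<Sum>t\<in>{1..s}. c t) \<le> covered_mass x S s" if "s < n" for s
    using that unfolding covered_mass_def by (intro sum_mono) auto
  moreover have "(\<Sum>t\<in>{1..s}. c t) \<le> 1" if "s < n" for s
    unfolding sum_c[symmetric] using that z by (intro sum_mono2) (auto simp: c_def intro: sum_nonneg)
  ultimately have "(\<Sum>s<n. 1 - min (covered_mass x S s) 1) \<le> (\<Sum>s<n. 1 - (\<Sum>t\<in>{1..s}. c t))"
    by (intro sum_mono) auto
  also have "\<dots> = (\<Sum>t\<in>{1..n}. real t * c t)"
    using sum_of_nat_mult_eq_sum_tails[of c n] unfolding sum_c by simp
  also have "\<dots> = (\<Sum>i\<in>{1..n}. \<Sum>t\<in>{1..n}. real t * z i t)"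
    unfolding c_def by (subst sum.swap) (simp add: sum_distrib_left)
  finally show ?thesis .
qed

lemma sum_uncovered_le_gbar:
  assumes "doubly_stochastic n x" and "S \<subseteq> {1..n}" and "S \<noteq> {}"
  shows "(\<Sum>s<n. 1 - min (covered_mass x S s) 1) \<le> gbar n x S"
  unfolding gbar_eq_Inf_lp_feasible
  using lp_feasible_exists[OF assms] sum_uncovered_le_lp_value[OF _ assms(2)]
  by (intro cInf_greatest) auto

section \<open>Opening order from a sequence of draws\<close>

definition first_occurrences :: "'a list \<Rightarrow> 'a list" where
  "first_occurrences xs = rev (remdups (rev xs))"

lemma set_first_occurrences [simp]: "set (first_occurrences xs) = set xs"
  by (simp add: first_occurrences_def)

lemma distinct_first_occurrences [simp]: "distinct (first_occurrences xs)"
  by (simp add: first_occurrences_def)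

lemma length_first_occurrences_le: "length (first_occurrences xs) \<le> length xs"
  using length_remdups_leq[of "rev xs"] by (simp add: first_occurrences_def)

lemma remdups_append_filter: "remdups (xs @ ys) = remdups (filter (\<lambda>x. x \<notin> set ys) xs) @ remdups ys"
  by (induction xs) auto

lemma first_occurrences_append:
  "first_occurrences (xs @ ys) = first_occurrences xs @ first_occurrences (filter (\<lambda>y. y \<notin> set xs) ys)"
  by (simp add: first_occurrences_def remdups_append_filter rev_filter)

lemma nth_shifted_permutes:
  assumes "distinct L" and "set L = {1..n}"
  shows "(\<lambda>t. if t \<in> {1..n} then L ! (t - 1) else t) permutes {1..n}"
proof (rule bij_imp_permutes)
  have "length L = n" using distinct_card[OF assms(1)] assms(2) by simp
  then have "bij_betw ((!) L) {..<n} {1..n}"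
    using bij_betw_nth[OF assms(1)] assms(2) by simp
  moreover have "bij_betw (\<lambda>t. t - 1) {1..n} {..<n}"
    by (rule bij_betwI[where g = Suc]) auto
  ultimately have "bij_betw ((!) L \<circ> (\<lambda>t. t - 1)) {1..n} {1..n}"
    by (intro bij_betw_trans)
  then show "bij_betw (\<lambda>t. if t \<in> {1..n} then L ! (t - 1) else t) {1..n} {1..n}"
    by (rule bij_betw_cong[THEN iffD1, rotated]) auto
qed auto

text \<open>b j is the box drawn in step j. The boxes are opened in the order of their first draw,
  followed by the boxes that are never drawn.\<close>
definition draw_order :: "nat \<Rightarrow> (nat \<Rightarrow> nat) \<Rightarrow> nat \<Rightarrow> nat" where
  "draw_order n b t = (if t \<in> {1..n}
     then first_occurrences (filter (\<lambda>i. i \<in> {1..n}) (map b [1..<n+1]) @ [1..<n+1]) ! (t - 1)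
     else t)"

lemma draw_order_permutes: "draw_order n b permutes {1..n}"
  unfolding draw_order_def by (rule nth_shifted_permutes) auto

lemma draw_order_opens_draw_early:
  assumes "h \<in> {1..n}" and "b h \<in> {1..n}"
  shows "\<exists>t\<in>{1..h}. draw_order n b t = b h"
proof -
  define xs where "xs = filter (\<lambda>i. i \<in> {1..n}) (map b [1..<h+1])"
  define ys where "ys = filter (\<lambda>i. i \<in> {1..n}) (map b [h+1..<n+1]) @ [1..<n+1]"
  have "[1..<n+1] = [1..<h+1] @ [h+1..<n+1]"
    using assms(1) upt_add_eq_append[of 1 "h + 1" "n - h"] by simp
  then have split: "filter (\<lambda>i. i \<in> {1..n}) (map b [1..<n+1]) @ [1..<n+1] = xs @ ys"
    unfolding xs_def ys_def by simp
  have "length (first_occurrences xs) \<le> length xs"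
    by (rule length_first_occurrences_le)
  also have "length xs \<le> h"
    unfolding xs_def by (rule order.trans[OF length_filter_le]) simp
  finally have short: "length (first_occurrences xs) \<le> h" .
  have "b h \<in> set (first_occurrences xs)"
    using assms unfolding xs_def by auto
  then obtain k where k: "k < length (first_occurrences xs)" "first_occurrences xs ! k = b h"
    using in_set_conv_nth[of "b h" "first_occurrences xs"] by blast
  then have "draw_order n b (k + 1) = b h"
    using short assms(1) unfolding draw_order_def split first_occurrences_append
    by (auto simp: nth_append)
  then show ?thesis
    using k short by (intro bexI[of _ "k + 1"]) auto
qed

lemma cover_time_le:
  assumes "t \<in> {1..n}" and "\<sigma> t \<in> S"
  shows "cover_time n \<sigma> S \<le> t"
  unfolding cover_time_def using assms by (intro Min_le) auto

lemma cover_time_le_card: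
  assumes "\<sigma> permutes {1..n}" and "S \<subseteq> {1..n}" and "S \<noteq> {}"
  shows "cover_time n \<sigma> S \<le> n"
proof -
  obtain i where "i \<in> S" using assms(3) by blast
  then obtain t where "t \<in> {1..n}" "\<sigma> t = i"
    using assms(2) permutes_image[OF assms(1)] by (metis imageE subsetD)
  then show ?thesis
    using cover_time_le[of t n \<sigma> S] \<open>i \<in> S\<close> by simp
qed

definition misses_until :: "nat set \<Rightarrow> nat \<Rightarrow> (nat \<Rightarrow> nat) set" where
  "misses_until S m = {b. \<forall>j\<in>{1..m}. b j \<notin> S}"

lemma cover_time_draw_order_le:
  assumes "S \<subseteq> {1..n}" and "S \<noteq> {}"
  shows "real (cover_time n (draw_order n b) S) \<le> (\<Sum>m<n. indicator (misses_until S m) b)"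
proof -
  have count: "real k \<le> (\<Sum>m<n. indicator (misses_until S m) b)"
    if "k \<le> n" and "\<And>j. j \<in> {1..n} \<Longrightarrow> j < k \<Longrightarrow> b j \<notin> S" for k
  proof -
    have "real k = (\<Sum>m<k. indicator (misses_until S m) b)"
      using that by (simp add: misses_until_def indicator_def)
    also have "\<dots> \<le> (\<Sum>m<n. indicator (misses_until S m) b)"
      using \<open>k \<le> n\<close> by (intro sum_mono2) auto
    finally show ?thesis .
  qed
  show ?thesis
  proof (cases "\<exists>h\<in>{1..n}. b h \<in> S")
    case True
    define h where "h = (LEAST h. h \<in> {1..n} \<and> b h \<in> S)"
    have "h \<in> {1..n} \<and> b h \<in> S"
      unfolding h_def by (rule LeastI_ex) (use True in blast)
    then have h: "h \<in> {1..n}" "b h \<in> S" by auto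
    obtain t where t: "t \<in> {1..h}" "draw_order n b t = b h"
      using draw_order_opens_draw_early[OF h(1)] h assms(1) by blast
    have "cover_time n (draw_order n b) S \<le> t"
      by (rule cover_time_le) (use t h in auto)
    then have "real (cover_time n (draw_order n b) S) \<le> real h"
      using t by simp
    also have "\<dots> \<le> (\<Sum>m<n. indicator (misses_until S m) b)"
    proof (rule count)
      show "h \<le> n" using h by simp
      show "b j \<notin> S" if "j \<in> {1..n}" "j < h" for j
        using that not_less_Least[of j "\<lambda>h. h \<in> {1..n} \<and> b h \<in> S"] unfolding h_def by blast
    qed
    finally show ?thesis .
  next
    case False
    have "real (cover_time n (draw_order n b) S) \<le> real n"
      using cover_time_le_card[OF draw_order_permutes assms] by simp
    also have "\<dots> \<le> (\<Sum>m<n. indicator (misses_until S m) b)"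
      by (rule count) (use False in auto)
    finally show ?thesis .
  qed
qed

section \<open>The rounding\<close>

definition prefix_weight :: "(nat \<Rightarrow> nat \<Rightarrow> real) \<Rightarrow> nat \<Rightarrow> nat \<Rightarrow> real" where
  "prefix_weight x w i = (\<Sum>t\<in>{1..w}. x i t) / real w"

text \<open>Pick one of the first w columns of x uniformly at random, then a box with the
  probabilities given by that column.\<close>
definition prefix_pmf :: "nat \<Rightarrow> (nat \<Rightarrow> nat \<Rightarrow> real) \<Rightarrow> nat \<Rightarrow> nat pmf" where
  "prefix_pmf n x w = pmf_of_list (map (\<lambda>i. (i, prefix_weight x w i)) [1..<n+1])"

lemma prefix_pmf_wf:
  assumes "doubly_stochastic n x" and "w \<in> {1..n}"
  shows "pmf_of_list_wf (map (\<lambda>i. (i, prefix_weight x w i)) [1..<n+1])"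
proof (rule pmf_of_list_wfI)
  have "0 \<le> prefix_weight x w i" if "i \<in> {1..n}" for i
    using that assms unfolding prefix_weight_def doubly_stochastic_def
    by (auto intro!: divide_nonneg_nonneg sum_nonneg)
  then show "0 \<le> p" if "p \<in> set (map snd (map (\<lambda>i. (i, prefix_weight x w i)) [1..<n+1]))" for p
    using that by auto
  have "sum_list (map snd (map (\<lambda>i. (i, prefix_weight x w i)) [1..<n+1]))
      = sum_list (map (prefix_weight x w) [1..<n+1])"
    by (simp add: o_def)
  also have "\<dots> = sum (prefix_weight x w) (set [1..<n+1])"
    by (rule sum_list_distinct_conv_sum_set) simp
  also have "set [1..<n+1] = {1..n}"
    by auto
  also have "(\<Sum>i\<in>{1..n}. prefix_weight x w i) = (\<Sum>t\<in>{1..w}. \<Sum>i\<in>{1..n}. x i t) / real w"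
    unfolding prefix_weight_def sum_divide_distrib[symmetric] by (subst sum.swap) (rule refl)
  also have "\<dots> = 1"
    using assms by (simp add: doubly_stochastic_def)
  finally show "sum_list (map snd (map (\<lambda>i. (i, prefix_weight x w i)) [1..<n+1])) = 1" .
qed

lemma prob_prefix_pmf:
  assumes "doubly_stochastic n x" and "w \<in> {1..n}" and "S \<subseteq> {1..n}"
  shows "measure_pmf.prob (prefix_pmf n x w) S = covered_mass x S w / real w"
proof -
  have "set (filter (\<lambda>i. i \<in> S) [1..<n+1]) = S"
    using assms(3) by auto
  then have "measure_pmf.prob (prefix_pmf n x w) S = (\<Sum>i\<in>S. prefix_weight x w i)"
    unfolding prefix_pmf_def measure_pmf_of_list[OF prefix_pmf_wf[OF assms(1,2)]]
    by (simp add: filter_map o_def sum_list_distinct_conv_sum_set)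
  also have "\<dots> = covered_mass x S w / real w"
    unfolding prefix_weight_def covered_mass_def sum_divide_distrib[symmetric]
    by (subst sum.swap) (rule refl)
  finally show ?thesis .
qed

definition draws_pmf :: "nat \<Rightarrow> (nat \<Rightarrow> nat \<Rightarrow> real) \<Rightarrow> (nat \<Rightarrow> nat) pmf" where
  "draws_pmf n x = Pi_pmf {1..n} 0 (\<lambda>j. prefix_pmf n x (window j))"

definition rounding :: "nat \<Rightarrow> (nat \<Rightarrow> nat \<Rightarrow> real) \<Rightarrow> (nat \<Rightarrow> nat) pmf" where
  "rounding n x = map_pmf (draw_order n) (draws_pmf n x)"

lemma window_mem: "j \<in> {1..n} \<Longrightarrow> window j \<in> {1..n}"
  by (auto simp: window_def)

lemma finite_set_draws_pmf:
  assumes "doubly_stochastic n x"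
  shows "finite (set_pmf (draws_pmf n x))"
proof -
  have "finite (set_pmf (prefix_pmf n x (window j)))" if "j \<in> {1..n}" for j
    unfolding prefix_pmf_def
    by (rule finite_set_pmf_of_list[OF prefix_pmf_wf[OF assms window_mem[OF that]]])
  then show ?thesis
    by (auto simp: draws_pmf_def set_Pi_pmf intro!: finite_PiE_dflt)
qed

lemma prob_draws_misses_until:
  assumes "m \<le> n"
  shows "measure_pmf.prob (draws_pmf n x) (misses_until S m)
           = (\<Prod>j\<in>{1..m}. 1 - measure_pmf.prob (prefix_pmf n x (window j)) S)"
proof -
  have "misses_until S m = Pi {1..n} (\<lambda>j. if j \<le> m then - S else UNIV)"
    using assms by (auto simp: misses_until_def Pi_def)
  then have "measure_pmf.prob (draws_pmf n x) (misses_until S m)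
      = (\<Prod>j\<in>{1..n}. measure_pmf.prob (prefix_pmf n x (window j)) (if j \<le> m then - S else UNIV))"
    by (simp add: draws_pmf_def measure_Pi_pmf_Pi)
  also have "\<dots> = (\<Prod>j\<in>{1..n}. if j \<in> {..m} then 1 - measure_pmf.prob (prefix_pmf n x (window j)) S else 1)"
    using measure_pmf.prob_compl[of S] by (intro prod.cong refl) (simp add: Compl_eq_Diff_UNIV)
  also have "\<dots> = (\<Prod>j\<in>{1..n} \<inter> {..m}. 1 - measure_pmf.prob (prefix_pmf n x (window j)) S)"
    by (simp only: prod.inter_restrict[OF finite_atLeastAtMost])
  also have "{1..n} \<inter> {..m} = {1..m}"
    using assms by auto
  finally show ?thesis .
qed

lemma set_pmf_rounding: "set_pmf (rounding n x) \<subseteq> {\<sigma>. \<sigma> permutes {1..n}}"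
  unfolding rounding_def set_map_pmf using draw_order_permutes by blast

lemma expected_cover_time_rounding_le:
  assumes "doubly_stochastic n x" and "S \<subseteq> {1..n}" and "S \<noteq> {}"
  shows "measure_pmf.expectation (rounding n x) (\<lambda>\<sigma>. real (cover_time n \<sigma> S))
           \<le> (\<Sum>m<n. \<Prod>j\<in>{1..m}. 1 - measure_pmf.prob (prefix_pmf n x (window j)) S)"
proof -
  have integrable: "integrable (measure_pmf (draws_pmf n x)) f" for f :: "(nat \<Rightarrow> nat) \<Rightarrow> real"
    by (rule integrable_measure_pmf_finite[OF finite_set_draws_pmf[OF assms(1)]])
  have "measure_pmf.expectation (rounding n x) (\<lambda>\<sigma>. real (cover_time n \<sigma> S))
      = measure_pmf.expectation (draws_pmf n x) (\<lambda>b. real (cover_time n (draw_order n b) S))"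
    by (simp add: rounding_def)
  also have "\<dots> \<le> measure_pmf.expectation (draws_pmf n x) (\<lambda>b. \<Sum>m<n. indicator (misses_until S m) b)"
    using assms(2,3) by (intro integral_mono integrable cover_time_draw_order_le)
  also have "\<dots> = (\<Sum>m<n. measure_pmf.prob (draws_pmf n x) (misses_until S m))"
    using integrable by (simp add: Bochner_Integration.integral_sum)
  also have "\<dots> = (\<Sum>m<n. \<Prod>j\<in>{1..m}. 1 - measure_pmf.prob (prefix_pmf n x (window j)) S)"
    by (intro sum.cong refl prob_draws_misses_until) simp
  finally show ?thesis .
qed

definition cover_increment :: "(nat \<Rightarrow> nat \<Rightarrow> real) \<Rightarrow> nat set \<Rightarrow> nat \<Rightarrow> real" where
  "cover_increment x S g = min (covered_mass x S g) 1 - min (covered_mass x S (g - 1)) 1"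

lemma cover_increment_nonneg:
  assumes "doubly_stochastic n x" and "S \<subseteq> {1..n}" and "g \<in> {1..n}"
  shows "0 \<le> cover_increment x S g"
proof -
  obtain s where s: "g = Suc s" using assms(3) by (cases g) auto
  have "0 \<le> (\<Sum>i\<in>S. x i g)"
    using assms by (intro sum_nonneg) (auto simp: doubly_stochastic_def)
  then show ?thesis
    unfolding cover_increment_def s covered_mass_Suc by simp
qed

lemma sum_cover_increment: "(\<Sum>g\<in>{1..s}. cover_increment x S g) = min (covered_mass x S s) 1"
  using sum_telescope''[of 0 s "\<lambda>g. min (covered_mass x S g) 1"]
  by (simp add: cover_increment_def covered_mass_def)

lemma sum_cover_increment_eq_1:
  assumes "doubly_stochastic n x" and "S \<subseteq> {1..n}" and "S \<noteq> {}"
  shows "(\<Sum>g\<in>{1..n}. cover_increment x S g) = 1"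
proof -
  have "covered_mass x S n = (\<Sum>i\<in>S. \<Sum>t\<in>{1..n}. x i t)"
    unfolding covered_mass_def by (rule sum.swap)
  also have "\<dots> = (\<Sum>i\<in>S. 1)"
    using assms(1,2) by (intro sum.cong) (auto simp: doubly_stochastic_def)
  finally have "1 \<le> covered_mass x S n"
    using assms(2,3) finite_subset by (fastforce simp: Suc_le_eq card_gt_0_iff)
  then show ?thesis
    unfolding sum_cover_increment by simp
qed

lemma mean_miss_factor:
  assumes "doubly_stochastic n x" and "S \<subseteq> {1..n}" and "S \<noteq> {}" and "window j \<le> n"
  shows "(\<Sum>g\<in>{1..n}. cover_increment x S g * miss_factor j g)
           = 1 - min (covered_mass x S (window j)) 1 / real (window j)"
proof -
  let ?\<mu> = "cover_increment x S" and ?w = "window j"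
  have "(\<Sum>g\<in>{1..n}. ?\<mu> g * miss_factor j g)
      = (\<Sum>g\<in>{1..n}. ?\<mu> g - (if g \<in> {1..?w} then ?\<mu> g / real ?w else 0))"
    by (intro sum.cong refl) (auto simp: miss_factor_def algebra_simps)
  also have "\<dots> = 1 - (\<Sum>g\<in>{1..n} \<inter> {1..?w}. ?\<mu> g / real ?w)"
    using sum_cover_increment_eq_1[OF assms(1-3)]
    by (simp only: sum_subtractf sum.inter_restrict[OF finite_atLeastAtMost])
  also have "{1..n} \<inter> {1..?w} = {1..?w}"
    using assms(4) by auto
  also have "(\<Sum>g\<in>{1..?w}. ?\<mu> g / real ?w) = min (covered_mass x S ?w) 1 / real ?w"
    unfolding sum_divide_distrib[symmetric] sum_cover_increment ..
  finally show ?thesis .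
qed

lemma miss_prob_le_mean_miss_factor:
  assumes "doubly_stochastic n x" and "S \<subseteq> {1..n}" and "S \<noteq> {}" and "j \<in> {1..n}"
  shows "1 - measure_pmf.prob (prefix_pmf n x (window j)) S
           \<le> (\<Sum>g\<in>{1..n}. cover_increment x S g * miss_factor j g)"
proof -
  have "1 - measure_pmf.prob (prefix_pmf n x (window j)) S
      = 1 - covered_mass x S (window j) / real (window j)"
    using prob_prefix_pmf[OF assms(1) window_mem[OF assms(4)] assms(2)] by simp
  also have "\<dots> \<le> 1 - min (covered_mass x S (window j)) 1 / real (window j)"
    by (simp add: divide_right_mono)
  also have "\<dots> = (\<Sum>g\<in>{1..n}. cover_increment x S g * miss_factor j g)"
    using mean_miss_factor[OF assms(1-3)] window_mem[OF assms(4)] by simp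
  finally show ?thesis .
qed

lemma sum_miss_probs_le:
  assumes "doubly_stochastic n x" and "S \<subseteq> {1..n}" and "S \<noteq> {}"
  shows "(\<Sum>m<n. \<Prod>j\<in>{1..m}. 1 - measure_pmf.prob (prefix_pmf n x (window j)) S)
           \<le> 4 * (\<Sum>s<n. 1 - min (covered_mass x S s) 1)"
proof -
  let ?\<mu> = "cover_increment x S" and ?q = "\<lambda>j. measure_pmf.prob (prefix_pmf n x (window j)) S"
  have \<mu>_nonneg: "\<And>g. g \<in> {1..n} \<Longrightarrow> 0 \<le> ?\<mu> g"
    using cover_increment_nonneg[OF assms(1,2)] .
  have "(\<Prod>j\<in>{1..m}. 1 - ?q j) \<le> (\<Sum>g\<in>{1..n}. ?\<mu> g * survival g m)" if "m < n" for m
  proof -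
    have "(\<Prod>j\<in>{1..m}. 1 - ?q j) \<le> (\<Prod>j\<in>{1..m}. \<Sum>g\<in>{1..n}. ?\<mu> g * miss_factor j g)"
      using that miss_prob_le_mean_miss_factor[OF assms] measure_pmf.prob_le_1
      by (intro prod_mono) auto
    also have "\<dots> \<le> (\<Sum>g\<in>{1..n}. ?\<mu> g * (\<Prod>j\<in>{1..m}. miss_factor j g))"
      using \<mu>_nonneg sum_cover_increment_eq_1[OF assms]
      by (intro prod_mean_le_mean_prod) (auto simp: miss_factor_nonneg mono_imp_mono_on mono_miss_factor)
    finally show ?thesis
      by (simp add: survival_def)
  qed
  then have "(\<Sum>m<n. \<Prod>j\<in>{1..m}. 1 - ?q j) \<le> (\<Sum>m<n. \<Sum>g\<in>{1..n}. ?\<mu> g * survival g m)"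
    by (intro sum_mono) auto
  also have "\<dots> = (\<Sum>g\<in>{1..n}. ?\<mu> g * (\<Sum>m<n. survival g m))"
    by (subst sum.swap) (simp add: sum_distrib_left)
  also have "\<dots> \<le> (\<Sum>g\<in>{1..n}. ?\<mu> g * (4 * real g))"
    using \<mu>_nonneg by (intro sum_mono mult_left_mono sum_survival_le) auto
  also have "\<dots> = 4 * (\<Sum>g\<in>{1..n}. real g * ?\<mu> g)"
    by (simp add: sum_distrib_left algebra_simps)
  also have "(\<Sum>g\<in>{1..n}. real g * ?\<mu> g) = (\<Sum>s<n. 1 - min (covered_mass x S s) 1)"
  proof -
    have "min (covered_mass x S n) 1 = 1"
      using sum_cover_increment_eq_1[OF assms] unfolding sum_cover_increment .
    then show ?thesis
      using sum_of_nat_mult_eq_sum_tails[of ?\<mu> n] unfolding sum_cover_increment by simp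
  qed
  finally show ?thesis .
qed

theorem corollaryC3:
  fixes n :: nat and x :: "nat \<Rightarrow> nat \<Rightarrow> real"
  assumes "doubly_stochastic n x"
  shows "\<exists>p :: (nat \<Rightarrow> nat) pmf.
           set_pmf p \<subseteq> {\<sigma>. \<sigma> permutes {1..n}} \<and>
           (\<forall>S. S \<subseteq> {1..n} \<and> S \<noteq> {} \<longrightarrow>
              measure_pmf.expectation p (\<lambda>\<sigma>. real (cover_time n \<sigma> S)) \<le> 4 * gbar n x S)"
proof (intro exI[of _ "rounding n x"] conjI allI impI)
  show "set_pmf (rounding n x) \<subseteq> {\<sigma>. \<sigma> permutes {1..n}}"
    by (rule set_pmf_rounding)
  fix S assume "S \<subseteq> {1..n} \<and> S \<noteq> {}"
  then have S: "S \<subseteq> {1..n}" "S \<noteq> {}" by auto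
  have "measure_pmf.expectation (rounding n x) (\<lambda>\<sigma>. real (cover_time n \<sigma> S))
      \<le> (\<Sum>m<n. \<Prod>j\<in>{1..m}. 1 - measure_pmf.prob (prefix_pmf n x (window j)) S)"
    by (rule expected_cover_time_rounding_le[OF assms S])
  also have "\<dots> \<le> 4 * (\<Sum>s<n. 1 - min (covered_mass x S s) 1)"
    by (rule sum_miss_probs_le[OF assms S])
  also have "\<dots> \<le> 4 * gbar n x S"
    using sum_uncovered_le_gbar[OF assms S] by simp
  finally show "measure_pmf.expectation (rounding n x) (\<lambda>\<sigma>. real (cover_time n \<sigma> S)) \<le> 4 * gbar n x S" .
qed

end
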